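(* Let $q$ be an odd prime power and $d\ge 2$. Let $V$ be a $(2d+1)$-dimensional vector space over $\mathbb{F}_q$ with basis $z,e_0,f_0,x,y,e_1,f_1,\dots,e_{d-2},f_{d-2}$ and nondegenerate symmetric bilinear form $\beta$ with $V=\langle z\rangle\perp\langle e_0,f_0\rangle\perp\langle x,y\rangle\perp\langle e_1,f_1\rangle\perp\cdots\perp\langle e_{d-2},f_{d-2}\rangle$, $\beta(z,z)=1$, $\beta(e_i,f_i)=1$, $\beta(e_i,e_i)=\beta(f_i,f_i)=0$, and $\langle x,y\rangle$ anisotropic; let $\kappa(v)=\beta(v,v)/2$ and let $\mathcal{Q}(2d,q)$ be the associated parabolic quadric. Let $W=\langle z,e_0,f_0\rangle$, $U=W^\perp$, $B=\{g\oplus 1_U: g\in\Omega(W)\}$ with $\Omega(W)$ the derived subgroup of the orthogonal group of $(W,\kappa|_W)$, and let $\tau$ be the linear map with $z\mapsto -z$ fixing all other basis vectors. Then for every point $P$ of $\mathcal{Q}(2d,q)$ there exists $g\in B$ with $P^g=P^\tau$.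
   Context: A point of $\mathcal{Q}(2d,q)$ is a $1$-dimensional subspace of $V$ on which $\kappa$ vanishes. *)

theory Defs
  imports Main
begin

text \<open>Coordinates w.r.t. the ordered basis
  z (index 0), e0 (1), f0 (2), x (3), y (4), and e_i (3+2i), f_i (4+2i) for i = 1..d-2.
  Vectors of V are functions nat => 'a vanishing at indices >= 2d+1.
  The Gram matrix of the anisotropic plane <x,y> is [[a,b],[b,c]].\<close>

definition Vsp :: "nat \<Rightarrow> (nat \<Rightarrow> 'a::field) set" where
  "Vsp d = {v. \<forall>k\<ge>2*d+1. v k = 0}"

definition beta :: "'a::field \<Rightarrow> 'a \<Rightarrow> 'a \<Rightarrow> nat \<Rightarrow> (nat \<Rightarrow> 'a) \<Rightarrow> (nat \<Rightarrow> 'a) \<Rightarrow> 'a" where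
  "beta a b c d u v =
     u 0 * v 0 + (u 1 * v 2 + u 2 * v 1)
     + (a * u 3 * v 3 + b * (u 3 * v 4 + u 4 * v 3) + c * u 4 * v 4)
     + (\<Sum>i\<in>{1..d-2}. u (3+2*i) * v (4+2*i) + u (4+2*i) * v (3+2*i))"

definition kappa :: "'a::field \<Rightarrow> 'a \<Rightarrow> 'a \<Rightarrow> nat \<Rightarrow> (nat \<Rightarrow> 'a) \<Rightarrow> 'a" where
  "kappa a b c d v = beta a b c d v v / 2"

definition anisotropic_plane :: "'a::field \<Rightarrow> 'a \<Rightarrow> 'a \<Rightarrow> bool" where
  "anisotropic_plane a b c \<longleftrightarrow>
     (\<forall>s t. a * s * s + 2 * b * s * t + c * t * t = 0 \<longrightarrow> s = 0 \<and> t = 0)"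

definition Wsp :: "(nat \<Rightarrow> 'a::field) set" where
  "Wsp = {v. \<forall>k\<ge>3. v k = 0}"

definition projW :: "(nat \<Rightarrow> 'a::field) \<Rightarrow> (nat \<Rightarrow> 'a)" where
  "projW v = (\<lambda>k. if k < 3 then v k else 0)"

definition projU :: "(nat \<Rightarrow> 'a::field) \<Rightarrow> (nat \<Rightarrow> 'a)" where
  "projU v = (\<lambda>k. if k < 3 then 0 else v k)"

definition line :: "(nat \<Rightarrow> 'a::field) \<Rightarrow> (nat \<Rightarrow> 'a) set" where
  "line v = {(\<lambda>k. s * v k) | s. True}"

text \<open>To make composition/inverses well defined on the whole ambient
  function space, elements are extended by the identity outside W (this extension
  is just a representation choice, it does not affect the group).\<close>
definition orthW :: "'a::field \<Rightarrow> 'a \<Rightarrow> 'a \<Rightarrow> nat \<Rightarrow> ((nat \<Rightarrow> 'a) \<Rightarrow> (nat \<Rightarrow> 'a)) set" where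
  "orthW a b c d = {g. bij_betw g Wsp Wsp
      \<and> (\<forall>u\<in>Wsp. \<forall>w\<in>Wsp. \<forall>s t. g (\<lambda>k. s * u k + t * w k) = (\<lambda>k. s * g u k + t * g w k))
      \<and> (\<forall>u\<in>Wsp. kappa a b c d (g u) = kappa a b c d u)
      \<and> (\<forall>v. v \<notin> Wsp \<longrightarrow> g v = v)}"

inductive_set OmegaW :: "'a::field \<Rightarrow> 'a \<Rightarrow> 'a \<Rightarrow> nat \<Rightarrow> ((nat \<Rightarrow> 'a) \<Rightarrow> (nat \<Rightarrow> 'a)) set"
  for a b c d where
  one: "id \<in> OmegaW a b c d"
| comm: "g \<in> orthW a b c d \<Longrightarrow> h \<in> orthW a b c d \<Longrightarrow> inv g \<circ> inv h \<circ> g \<circ> h \<in> OmegaW a b c d"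
| mult: "g \<in> OmegaW a b c d \<Longrightarrow> h \<in> OmegaW a b c d \<Longrightarrow> g \<circ> h \<in> OmegaW a b c d"
| inverse: "g \<in> OmegaW a b c d \<Longrightarrow> inv g \<in> OmegaW a b c d"

definition oplusU :: "((nat \<Rightarrow> 'a::field) \<Rightarrow> (nat \<Rightarrow> 'a)) \<Rightarrow> (nat \<Rightarrow> 'a) \<Rightarrow> (nat \<Rightarrow> 'a)" where
  "oplusU g v = (\<lambda>k. g (projW v) k + projU v k)"

definition Bgrp :: "'a::field \<Rightarrow> 'a \<Rightarrow> 'a \<Rightarrow> nat \<Rightarrow> ((nat \<Rightarrow> 'a) \<Rightarrow> (nat \<Rightarrow> 'a)) set" where
  "Bgrp a b c d = oplusU ` OmegaW a b c d"

definition tau :: "(nat \<Rightarrow> 'a::field) \<Rightarrow> (nat \<Rightarrow> 'a)" where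
  "tau v = v(0 := - v 0)"

end

theory Submission
  imports Defs "HOL-Number_Theory.Residues"
begin

text \<open>Only the \<open>W\<close>-part of a point matters, since \<open>B\<close> acts trivially on \<open>U\<close>. The
  reflection \<open>r\<^sub>z\<close> in \<open>z\<^sup>\<perp>\<close> acts on \<open>W\<close> as \<open>\<tau>\<close>. For \<open>u\<close> the image under \<open>\<tau>\<close> of
  the \<open>W\<close>-part of a point, choose an anisotropic \<open>p \<in> W\<close> whose reflection \<open>r\<^sub>p\<close>
  moves \<open>u\<close> into \<open>\<langle>e\<^sub>0, f\<^sub>0\<rangle> = z\<^sup>\<perp> \<inter> W\<close>; such a \<open>p\<close> exists as soon as
  \<open>2 \<noteq> 0\<close>. Then \<open>r\<^sub>z\<close> fixes \<open>r\<^sub>p u\<close>, so the commutator \<open>r\<^sub>p r\<^sub>z r\<^sub>p r\<^sub>z \<in> \<Omega>(W)\<close> maps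
  every vector of the line to its image under \<open>\<tau>\<close>.\<close>

lemma two_neq_zero_if_odd_card:
  assumes "odd (card (UNIV :: 'a::{field,finite} set))"
  shows "(2::'a) \<noteq> 0"
proof
  assume "(2::'a) = 0"
  then have "CHAR('a) dvd 2"
    using of_nat_eq_0_iff_char_dvd[where n = 2 and 'a = 'a] by simp
  then have "CHAR('a) = 2"
    using CHAR_not_1 two_is_prime_nat by (auto simp: prime_nat_iff)
  then show False
    using CHAR_dvd_CARD[where 'a = 'a] assms by simp
qed

definition formW :: "(nat \<Rightarrow> 'a::field) \<Rightarrow> (nat \<Rightarrow> 'a) \<Rightarrow> 'a" where
  "formW u v = u 0 * v 0 + u 1 * v 2 + u 2 * v 1"

lemma beta_eq_formW:
  assumes "u \<in> Wsp"
  shows "beta a b c d u u = formW u u"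
proof -
  have "u k = 0" if "k \<ge> 3" for k
    using assms that unfolding Wsp_def by auto
  then show ?thesis
    unfolding beta_def formW_def by simp
qed

lemma formW_diff_left: "formW (\<lambda>k. x k - m * p k) y = formW x y - m * formW p y"
  unfolding formW_def by (simp add: algebra_simps)

lemma formW_diff_diff:
  "formW (\<lambda>k. x k - m * p k) (\<lambda>k. x k - m * p k) = formW x x - m * (2 * formW x p) + m * (m * formW p p)"
  unfolding formW_def by (simp add: algebra_simps)

definition vec3 :: "'a::field \<Rightarrow> 'a \<Rightarrow> 'a \<Rightarrow> nat \<Rightarrow> 'a" where
  "vec3 x0 x1 x2 = (\<lambda>k. if k = 0 then x0 else if k = 1 then x1 else if k = 2 then x2 else 0)"

lemma vec3_in_Wsp: "vec3 x0 x1 x2 \<in> Wsp"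
  unfolding vec3_def Wsp_def by auto

lemma formW_z: "formW (vec3 1 0 0) (vec3 1 0 0) = (1::'a::field)"
  by (simp add: formW_def vec3_def)

definition reflW :: "(nat \<Rightarrow> 'a::field) \<Rightarrow> (nat \<Rightarrow> 'a) \<Rightarrow> (nat \<Rightarrow> 'a)" where
  "reflW p x = (if x \<in> Wsp then (\<lambda>k. x k - 2 * formW x p / formW p p * p k) else x)"

lemma reflW_in_Wsp: "p \<in> Wsp \<Longrightarrow> x \<in> Wsp \<Longrightarrow> reflW p x \<in> Wsp"
  unfolding reflW_def Wsp_def by auto

lemma reflW_eq:
  "x \<in> Wsp \<Longrightarrow> reflW p x = (\<lambda>k. x k - 2 * formW x p / formW p p * p k)"
  unfolding reflW_def by simp

lemma formW_reflW_left:
  assumes "x \<in> Wsp" "formW p p \<noteq> 0"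
  shows "formW (reflW p x) p = - formW x p"
  unfolding reflW_eq[OF assms(1)] formW_diff_left using assms(2) by simp

lemma reflW_reflW:
  assumes p: "p \<in> Wsp" and anis: "formW p p \<noteq> 0"
  shows "reflW p (reflW p x) = x"
proof (cases "x \<in> Wsp")
  case True
  then show ?thesis
    using anis reflW_in_Wsp[OF p True]
    by (simp add: reflW_eq[of "reflW p x"] formW_reflW_left) (simp add: reflW_eq)
qed (simp add: reflW_def)

lemma reflW_comp_reflW: "p \<in> Wsp \<Longrightarrow> formW p p \<noteq> 0 \<Longrightarrow> reflW p \<circ> reflW p = id"
  by (simp add: fun_eq_iff reflW_reflW)

lemma reflW_linear:
  assumes "u \<in> Wsp" "w \<in> Wsp"
  shows "reflW p (\<lambda>k. s * u k + t * w k) = (\<lambda>k. s * reflW p u k + t * reflW p w k)"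
proof -
  have "(\<lambda>k. s * u k + t * w k) \<in> Wsp"
    using assms unfolding Wsp_def by auto
  then show ?thesis
    using assms unfolding reflW_def formW_def
    by (auto simp: fun_eq_iff algebra_simps add_divide_distrib)
qed

lemma reflW_scale:
  assumes "u \<in> Wsp"
  shows "reflW p (\<lambda>k. s * u k) = (\<lambda>k. s * reflW p u k)"
  using reflW_linear[OF assms assms, of p s 0] by simp

lemma reflW_in_orthW:
  assumes p: "p \<in> Wsp" and anis: "formW p p \<noteq> 0"
  shows "reflW p \<in> orthW a b c d"
  unfolding orthW_def
proof (intro CollectI conjI ballI allI impI)
  show "bij_betw (reflW p) Wsp Wsp"
    by (rule bij_betw_byWitness[where f' = "reflW p"])
      (auto simp: reflW_reflW[OF p anis] reflW_in_Wsp[OF p])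
next
  fix u :: "nat \<Rightarrow> 'a" assume u: "u \<in> Wsp"
  define m where "m = 2 * formW u p / formW p p"
  have r: "reflW p u = (\<lambda>k. u k - m * p k)"
    unfolding m_def using reflW_eq[OF u] .
  have "2 * formW u p = m * formW p p"
    unfolding m_def using anis by simp
  then have "formW (reflW p u) (reflW p u) = formW u u"
    unfolding r formW_diff_diff by (simp add: algebra_simps)
  then show "kappa a b c d (reflW p u) = kappa a b c d u"
    unfolding kappa_def using beta_eq_formW[OF u] beta_eq_formW[OF reflW_in_Wsp[OF p u]]
    by simp
qed (simp add: reflW_linear, simp add: reflW_def)

lemma reflW_z_eq_tau: "w \<in> Wsp \<Longrightarrow> reflW (vec3 1 0 0) w = tau w"
  by (auto simp: reflW_def formW_def vec3_def tau_def fun_eq_iff)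

lemma commutator_of_involutions_in_OmegaW:
  assumes "g \<in> orthW a b c d" "h \<in> orthW a b c d" "g \<circ> g = id" "h \<circ> h = id"
  shows "g \<circ> h \<circ> g \<circ> h \<in> OmegaW a b c d"
  using OmegaW.comm[OF assms(1,2)] assms(3,4) by (simp add: inv_unique_comp)

lemma exists_reflW_into_z_perp:
  fixes u :: "nat \<Rightarrow> 'a::field"
  assumes two: "(2::'a) \<noteq> 0" and u: "u \<in> Wsp"
  shows "\<exists>p\<in>Wsp. formW p p \<noteq> (0::'a) \<and> reflW p u 0 = 0"
proof -
  have "\<exists>p\<in>Wsp. formW p p \<noteq> (0::'a) \<and> u 0 * formW p p = 2 * formW u p * p 0"
    \<comment> \<open>for \<open>p 0 = 1\<close> and \<open>p 1 = 0\<close> (or \<open>p 2 = 0\<close>) the condition is linear in \<open>p 2\<close> (or \<open>p 1\<close>);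
       if \<open>u 1 = u 2 = 0\<close>, any \<open>p\<close> with \<open>p 0 = 1\<close> and \<open>formW p p = 2\<close> works\<close>
  proof (cases "u 1 = 0")
    case False
    then show ?thesis
      by (intro bexI[of _ "vec3 1 0 (- u 0 / (2 * u 1))"] vec3_in_Wsp)
        (auto simp: formW_def vec3_def field_simps two)
  next
    case u1: True
    show ?thesis
    proof (cases "u 2 = 0")
      case False
      then show ?thesis
        by (intro bexI[of _ "vec3 1 (- u 0 / (2 * u 2)) 0"] vec3_in_Wsp)
          (auto simp: formW_def vec3_def field_simps two)
    next
      case True
      have "(4::'a) \<noteq> 0"
        using two by (metis mult_2_right mult_eq_0_iff numeral_Bit0)
      then show ?thesis
        using True u1 by (intro bexI[of _ "vec3 1 1 (1/2)"] vec3_in_Wsp)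
          (auto simp: formW_def vec3_def field_simps two)
    qed
  qed
  then show ?thesis
    by (auto simp: reflW_eq[OF u] field_simps)
qed

lemma commutator_reflW_eq_tau:
  assumes p: "p \<in> Wsp" "formW p p \<noteq> 0" and w: "w \<in> Wsp" and "reflW p (tau w) 0 = 0"
  shows "(reflW p \<circ> reflW (vec3 1 0 0) \<circ> reflW p \<circ> reflW (vec3 1 0 0)) w = tau w"
proof -
  have tau_w: "tau w \<in> Wsp"
    using w unfolding tau_def Wsp_def by auto
  have "reflW (vec3 1 0 0) (reflW p (tau w)) = reflW p (tau w)"
    using reflW_z_eq_tau[OF reflW_in_Wsp[OF p(1) tau_w]] assms(4)
    by (simp add: tau_def fun_upd_idem)
  then show ?thesis
    using reflW_z_eq_tau[OF w] reflW_reflW[OF p] by simp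
qed

lemma tau_projW_scale: "tau (projW (\<lambda>k. s * v k)) = (\<lambda>k. s * tau (projW v) k)"
  by (auto simp: tau_def projW_def fun_eq_iff)

lemma tau_projW_in_Wsp: "tau (projW v) \<in> Wsp"
  unfolding tau_def projW_def Wsp_def by auto

lemma oplusU_eq_tau:
  assumes "g (projW y) = tau (projW y)"
  shows "oplusU g y = tau y"
  using assms by (auto simp: oplusU_def tau_def projW_def projU_def fun_eq_iff)

lemma exists_OmegaW_eq_tau_on_line:
  assumes two: "(2::'a::field) \<noteq> 0"
  shows "\<exists>g\<in>OmegaW a b c d. \<forall>y\<in>line v. g (projW y) = (tau (projW y) :: nat \<Rightarrow> 'a)"
proof -
  let ?rz = "reflW (vec3 (1::'a) 0 0)"
  obtain p where p: "p \<in> Wsp" "formW p p \<noteq> 0" and moved: "reflW p (tau (projW v)) 0 = 0"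
    using exists_reflW_into_z_perp[OF two tau_projW_in_Wsp] by blast
  have "reflW p \<circ> ?rz \<circ> reflW p \<circ> ?rz \<in> OmegaW a b c d"
    by (intro commutator_of_involutions_in_OmegaW reflW_in_orthW reflW_comp_reflW)
      (simp_all add: p vec3_in_Wsp formW_z)
  moreover have "(reflW p \<circ> ?rz \<circ> reflW p \<circ> ?rz) (projW y) = tau (projW y)" if "y \<in> line v" for y
  proof -
    obtain s where y: "y = (\<lambda>k. s * v k)"
      using \<open>y \<in> line v\<close> unfolding line_def by blast
    have "reflW p (tau (projW y)) 0 = 0"
      using moved unfolding y tau_projW_scale reflW_scale[OF tau_projW_in_Wsp] by simp
    then show ?thesis
      using commutator_reflW_eq_tau[OF p] by (simp add: projW_def Wsp_def)
  qed
  ultimately show ?thesis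
    by blast
qed

theorem lemma3p5:
  fixes a b c :: "'a::{field,finite}" and d :: nat
  assumes "odd (card (UNIV :: 'a set))"
    and "d \<ge> 2"
    and "anisotropic_plane a b c"
  shows "\<forall>v\<in>Vsp d. v \<noteq> (\<lambda>_. 0) \<and> kappa a b c d v = 0 \<longrightarrow>
           (\<exists>g\<in>Bgrp a b c d. g ` line v = tau ` line v)"
proof (intro ballI impI)
  fix v :: "nat \<Rightarrow> 'a"
  obtain g where "g \<in> OmegaW a b c d" and g: "\<forall>y\<in>line v. g (projW y) = tau (projW y)"
    using exists_OmegaW_eq_tau_on_line[OF two_neq_zero_if_odd_card[OF assms(1)]] by blast
  then have "oplusU g \<in> Bgrp a b c d"
    unfolding Bgrp_def by blast
  moreover have "oplusU g ` line v = tau ` line v"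
    using g oplusU_eq_tau by (intro image_cong) auto
  ultimately show "\<exists>g\<in>Bgrp a b c d. g ` line v = tau ` line v"
    by blast
qed

end
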